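(* Let $G$ be a graph with $n$ vertices and $m$ edges such that $\omega(G)=\chi(G)$ (i.e. $G$ is weakly perfect), and write $\omega=\omega(G)$. Let $\mu_1\ge\mu_2\ge\cdots\ge\mu_n$ be the eigenvalues of the adjacency matrix of $G$, let $n^+$ be the number of positive eigenvalues, and let $\ell=\min(n^+,\omega)$. Then \[ \mu_1^2+\mu_2^2+\cdots+\mu_\ell^2\le \frac{2m(\omega-1)}{\omega}. \]
   Context: $\omega(G)$ denotes the clique number and $\chi(G)$ the chromatic number of $G$. Eigenvalues are those of the adjacency matrix. An empty sum (when $\ell=0$) equals $0$. *)

theory Defs
  imports "Jordan_Normal_Form.Char_Poly"
begin

definition simple_graph :: "nat \<Rightarrow> (nat \<Rightarrow> nat \<Rightarrow> bool) \<Rightarrow> bool" where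
  "simple_graph n E \<longleftrightarrow> (\<forall>i<n. \<forall>j<n. E i j \<longleftrightarrow> E j i) \<and> (\<forall>i<n. \<not> E i i)"

definition num_edges :: "nat \<Rightarrow> (nat \<Rightarrow> nat \<Rightarrow> bool) \<Rightarrow> nat" where
  "num_edges n E = card {(i, j). i < j \<and> j < n \<and> E i j}"

definition is_clique :: "nat \<Rightarrow> (nat \<Rightarrow> nat \<Rightarrow> bool) \<Rightarrow> nat set \<Rightarrow> bool" where
  "is_clique n E K \<longleftrightarrow> K \<subseteq> {0..<n} \<and> (\<forall>i\<in>K. \<forall>j\<in>K. i \<noteq> j \<longrightarrow> E i j)"

definition clique_number :: "nat \<Rightarrow> (nat \<Rightarrow> nat \<Rightarrow> bool) \<Rightarrow> nat" where
  "clique_number n E = Max {card K | K. is_clique n E K}"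

definition proper_colouring :: "nat \<Rightarrow> (nat \<Rightarrow> nat \<Rightarrow> bool) \<Rightarrow> nat \<Rightarrow> (nat \<Rightarrow> nat) \<Rightarrow> bool" where
  "proper_colouring n E k c \<longleftrightarrow> (\<forall>i<n. c i < k) \<and> (\<forall>i<n. \<forall>j<n. E i j \<longrightarrow> c i \<noteq> c j)"

definition chromatic_number :: "nat \<Rightarrow> (nat \<Rightarrow> nat \<Rightarrow> bool) \<Rightarrow> nat" where
  "chromatic_number n E = (LEAST k. \<exists>c. proper_colouring n E k c)"

definition adj_matrix :: "nat \<Rightarrow> (nat \<Rightarrow> nat \<Rightarrow> bool) \<Rightarrow> real mat" where
  "adj_matrix n E = mat n n (\<lambda>(i, j). if E i j then 1 else 0)"

text \<open>mu is the list of adjacency eigenvalues, with multiplicity, in nonincreasing order: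
  the characteristic polynomial splits as the product of (x - mu_i).\<close>
definition adj_eigenvalues_sorted :: "nat \<Rightarrow> (nat \<Rightarrow> nat \<Rightarrow> bool) \<Rightarrow> real list \<Rightarrow> bool" where
  "adj_eigenvalues_sorted n E mu \<longleftrightarrow> length mu = n \<and> sorted_wrt (\<ge>) mu \<and>
     char_poly (adj_matrix n E) = (\<Prod>a\<leftarrow>mu. [:- a, 1:])"

end

theory Submission
  imports Defs "Jordan_Normal_Form.Schur_Decomposition" "HOL-Analysis.Convex"
begin

(*
  Following Ando and Lin: let A be the adjacency matrix, c a proper colouring with
  k = chi(G) = omega(G) colours, and F the sum of the squared positive eigenvalues.
  Interpolating sqrt (max x 0) on the spectrum gives a polynomial q such that the Gram matrix
  M = q(A)^T q(A) satisfies <M, A> = |M|^2 = F (Frobenius inner product and norm): for the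
  symmetric matrix A these only involve traces of powers of A, which a Schur decomposition
  expresses through the eigenvalues. Write M = S + R with S the part of M on the colour classes.
  Because M is a Gram matrix, Cauchy-Schwarz over the colours gives F = |M|^2 <= k |S|^2, hence
  |R|^2 <= (1 - 1/k) F. Since A vanishes on the colour classes, F = <R, A> <= |R| |A|, and
  |A|^2 = 2m, so F <= (1 - 1/k) 2m. Finally the first l eigenvalues are positive, so the sum of
  their squares is at most F.
*)

lemma sum_swap_inner_to_outer:
  "(\<Sum>t\<in>T. \<Sum>s\<in>S. \<Sum>i\<in>I. h i t s) = (\<Sum>i\<in>I. \<Sum>t\<in>T. \<Sum>s\<in>S. h i t s)"
  by (rule trans[OF sum.cong[OF refl sum.swap] sum.swap])

lemma sum_swap_pairs:
  "(\<Sum>a\<in>A. \<Sum>b\<in>B. \<Sum>u\<in>U. \<Sum>v\<in>V. h a b u v) = (\<Sum>u\<in>U. \<Sum>v\<in>V. \<Sum>a\<in>A. \<Sum>b\<in>B. h a b u v)"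
  by (rule trans[OF sum_swap_inner_to_outer sum.cong[OF refl sum_swap_inner_to_outer]])

lemma sum_sq_gram_cols_eq_rows:
  fixes N :: "'t \<Rightarrow> 'v \<Rightarrow> real"
  shows "(\<Sum>a\<in>V. \<Sum>b\<in>V. (\<Sum>t\<in>T. N t a * N t b)\<^sup>2) = (\<Sum>t\<in>T. \<Sum>s\<in>T. (\<Sum>a\<in>V. N t a * N s a)\<^sup>2)"
proof -
  have "(\<Sum>a\<in>V. \<Sum>b\<in>V. (\<Sum>t\<in>T. N t a * N t b)\<^sup>2)
      = (\<Sum>a\<in>V. \<Sum>b\<in>V. \<Sum>t\<in>T. \<Sum>s\<in>T. (N t a * N s a) * (N t b * N s b))"
    by (simp only: power2_eq_square sum_product) (simp only: mult_ac)
  also have "\<dots> = (\<Sum>t\<in>T. \<Sum>s\<in>T. \<Sum>a\<in>V. \<Sum>b\<in>V. (N t a * N s a) * (N t b * N s b))"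
    by (rule sum_swap_pairs)
  also have "\<dots> = (\<Sum>t\<in>T. \<Sum>s\<in>T. (\<Sum>a\<in>V. N t a * N s a)\<^sup>2)"
    by (simp only: power2_eq_square sum_product)
  finally show ?thesis .
qed

lemma gram_sum_sq_le_colour_classes:
  fixes N :: "'t \<Rightarrow> 'v \<Rightarrow> real" and c :: "'v \<Rightarrow> 'c"
  assumes "finite V" "finite C" "c ` V \<subseteq> C"
  shows "(\<Sum>a\<in>V. \<Sum>b\<in>V. (\<Sum>t\<in>T. N t a * N t b)\<^sup>2)
    \<le> card C * (\<Sum>a\<in>V. \<Sum>b\<in>V. if c a = c b then (\<Sum>t\<in>T. N t a * N t b)\<^sup>2 else 0)"
proof -
  (* |N^T N| = |N N^T|, and N N^T is the sum over the colours i of N_i N_i^T, where N_i keeps the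
     columns of colour i. *)
  define X where "X i t s = (\<Sum>a\<in>{a\<in>V. c a = i}. N t a * N s a)" for i t s
  have split: "(\<Sum>a\<in>V. N t a * N s a) = (\<Sum>i\<in>C. X i t s)" for t s
    unfolding X_def using assms by (rule sum.group[symmetric])
  have classes: "(\<Sum>i\<in>C. \<Sum>a\<in>{a\<in>V. c a = i}. \<Sum>b\<in>{b\<in>V. c b = i}. f a b)
      = (\<Sum>a\<in>V. \<Sum>b\<in>V. if c a = c b then f a b else 0)" for f :: "'v \<Rightarrow> 'v \<Rightarrow> real"
  proof -
    have "(\<Sum>i\<in>C. \<Sum>a\<in>{a\<in>V. c a = i}. \<Sum>b\<in>{b\<in>V. c b = i}. f a b)
        = (\<Sum>i\<in>C. \<Sum>a\<in>{a\<in>V. c a = i}. \<Sum>b\<in>{b\<in>V. c a = c b}. f a b)"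
      by (intro sum.cong) auto
    also have "\<dots> = (\<Sum>a\<in>V. \<Sum>b\<in>{b\<in>V. c a = c b}. f a b)"
      using assms by (rule sum.group)
    finally show ?thesis
      using \<open>finite V\<close> by (simp add: sum.inter_filter)
  qed
  have "(\<Sum>a\<in>V. \<Sum>b\<in>V. (\<Sum>t\<in>T. N t a * N t b)\<^sup>2) = (\<Sum>t\<in>T. \<Sum>s\<in>T. (\<Sum>i\<in>C. X i t s)\<^sup>2)"
    by (simp only: sum_sq_gram_cols_eq_rows split)
  also have "\<dots> \<le> (\<Sum>t\<in>T. \<Sum>s\<in>T. card C * (\<Sum>i\<in>C. (X i t s)\<^sup>2))"
    by (intro sum_mono) (metis sum_squared_le_sum_of_squares mult.commute)
  also have "\<dots> = card C * (\<Sum>t\<in>T. \<Sum>s\<in>T. \<Sum>i\<in>C. (X i t s)\<^sup>2)"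
    by (simp only: sum_distrib_left)
  also have "(\<Sum>t\<in>T. \<Sum>s\<in>T. \<Sum>i\<in>C. (X i t s)\<^sup>2) = (\<Sum>i\<in>C. \<Sum>t\<in>T. \<Sum>s\<in>T. (X i t s)\<^sup>2)"
    by (rule sum_swap_inner_to_outer)
  also have "(\<Sum>i\<in>C. \<Sum>t\<in>T. \<Sum>s\<in>T. (X i t s)\<^sup>2)
      = (\<Sum>i\<in>C. \<Sum>a\<in>{a\<in>V. c a = i}. \<Sum>b\<in>{b\<in>V. c b = i}. (\<Sum>t\<in>T. N t a * N t b)\<^sup>2)"
    unfolding X_def by (rule sum.cong[OF refl], rule sum_sq_gram_cols_eq_rows[symmetric])
  finally show ?thesis
    by (simp only: classes)
qed

lemma Cauchy_Schwarz_ineq_double_sum: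
  fixes f g :: "'a \<Rightarrow> 'b \<Rightarrow> real"
  shows "(\<Sum>a\<in>A. \<Sum>b\<in>B. f a b * g a b)\<^sup>2
    \<le> (\<Sum>a\<in>A. \<Sum>b\<in>B. (f a b)\<^sup>2) * (\<Sum>a\<in>A. \<Sum>b\<in>B. (g a b)\<^sup>2)"
  using Cauchy_Schwarz_ineq_sum[of "\<lambda>(a, b). f a b" "\<lambda>(a, b). g a b" "A \<times> B"]
  by (simp add: sum.cartesian_product case_prod_beta)

lemma gram_colour_bound:
  fixes N :: "'t \<Rightarrow> 'v \<Rightarrow> real" and T :: "'t set"
    and A :: "'v \<Rightarrow> 'v \<Rightarrow> real" and c :: "'v \<Rightarrow> 'c"
  defines "M a b \<equiv> \<Sum>t\<in>T. N t a * N t b"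
  assumes "finite V" "finite C" "c ` V \<subseteq> C"
    and zero_on_classes: "\<And>a b. a \<in> V \<Longrightarrow> b \<in> V \<Longrightarrow> c a = c b \<Longrightarrow> A a b = 0"
    and inner: "(\<Sum>a\<in>V. \<Sum>b\<in>V. M a b * A a b) = F"
    and norm: "(\<Sum>a\<in>V. \<Sum>b\<in>V. (M a b)\<^sup>2) = F"
  shows "F \<le> (1 - 1 / card C) * (\<Sum>a\<in>V. \<Sum>b\<in>V. (A a b)\<^sup>2)"
proof -
  define S where "S = (\<Sum>a\<in>V. \<Sum>b\<in>V. if c a = c b then (M a b)\<^sup>2 else 0)"
  define R where "R = (\<Sum>a\<in>V. \<Sum>b\<in>V. (if c a = c b then 0 else M a b)\<^sup>2)"
  define W where "W = (\<Sum>a\<in>V. \<Sum>b\<in>V. (A a b)\<^sup>2)"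
  have "W \<ge> 0" "F \<ge> 0" "S \<ge> 0"
    unfolding W_def S_def norm[symmetric] by (auto intro!: sum_nonneg)
  have square_split:
    "(M a b)\<^sup>2 = (if c a = c b then (M a b)\<^sup>2 else 0) + (if c a = c b then 0 else M a b)\<^sup>2" for a b
    by simp
  have "F = S + R"
    unfolding norm[symmetric] S_def R_def by (subst square_split) (simp only: sum.distrib)
  have "F \<le> card C * S"
    using gram_sum_sq_le_colour_classes[OF assms(2-4), where N = N and T = T]
    unfolding S_def M_def norm[unfolded M_def] .
  have "F = (\<Sum>a\<in>V. \<Sum>b\<in>V. (if c a = c b then 0 else M a b) * A a b)"
    unfolding inner[symmetric] using zero_on_classes by (intro sum.cong refl) auto
  then have "F\<^sup>2 \<le> R * W"
    unfolding R_def W_def by (simp only: Cauchy_Schwarz_ineq_double_sum)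
  show ?thesis
  proof (cases "F = 0 \<or> card C = 0")
    case True
    then have "F = 0"
      using \<open>F \<le> card C * S\<close> \<open>F \<ge> 0\<close> by auto
    moreover have "1 / real (card C) \<le> 1"
      by (cases "card C") auto
    ultimately show ?thesis
      using \<open>W \<ge> 0\<close> unfolding W_def by simp
  next
    case False
    then have "F > 0" "card C > 0"
      using \<open>F \<ge> 0\<close> by auto
    then have R: "R \<le> (1 - 1 / card C) * F"
      using \<open>F = S + R\<close> \<open>F \<le> card C * S\<close> by (simp add: field_simps)
    have "F * F \<le> R * W"
      using \<open>F\<^sup>2 \<le> R * W\<close> by (simp add: power2_eq_square)
    also have "\<dots> \<le> ((1 - 1 / card C) * F) * W"
      using R \<open>W \<ge> 0\<close> by (rule mult_right_mono)
    finally have "F * F \<le> F * ((1 - 1 / card C) * W)"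
      by (simp only: ac_simps)
    then show ?thesis
      using \<open>F > 0\<close> unfolding W_def by simp
  qed
qed

lemma index_mult_mat_sum:
  assumes "A \<in> carrier_mat nr n" "B \<in> carrier_mat n nc" "i < nr" "j < nc"
  shows "(A * B) $$ (i, j) = (\<Sum>t<n. A $$ (i, t) * B $$ (t, j))"
  using assms by (simp add: scalar_prod_def lessThan_atLeast0)

lemma pow_mat_add:
  assumes "A \<in> carrier_mat n n"
  shows "A ^\<^sub>m (j + k) = A ^\<^sub>m j * A ^\<^sub>m k"
proof (induction k)
  case 0
  show ?case using assms by simp
next
  case (Suc k)
  have "A ^\<^sub>m (j + Suc k) = (A ^\<^sub>m j * A ^\<^sub>m k) * A"
    using Suc by simp
  also have "\<dots> = A ^\<^sub>m j * (A ^\<^sub>m k * A)"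
    using assms by (intro assoc_mult_mat) auto
  finally show ?case by simp
qed

lemma transpose_pow_mat_symmetric:
  fixes A :: "'a::comm_semiring_1 mat"
  assumes "A \<in> carrier_mat n n" "A\<^sup>T = A"
  shows "(A ^\<^sub>m k)\<^sup>T = A ^\<^sub>m k"
proof (induction k)
  case 0
  show ?case by simp
next
  case (Suc k)
  have "(A ^\<^sub>m Suc k)\<^sup>T = A\<^sup>T * (A ^\<^sub>m k)\<^sup>T"
    using assms by (simp add: transpose_mult[of _ n n])
  also have "\<dots> = A ^\<^sub>m 1 * A ^\<^sub>m k"
    using Suc assms by simp
  also have "\<dots> = A ^\<^sub>m Suc k"
    using pow_mat_add[OF assms(1), of 1 k] by simp
  finally show ?case .
qed

lemma pow_mat_symmetric_index:
  fixes A :: "'a::comm_semiring_1 mat"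
  assumes "A \<in> carrier_mat n n" "A\<^sup>T = A" "a < n" "b < n"
  shows "(A ^\<^sub>m k) $$ (b, a) = (A ^\<^sub>m k) $$ (a, b)"
  using assms index_transpose_mat(1)[of b "A ^\<^sub>m k" a]
  by (simp add: transpose_pow_mat_symmetric[OF assms(1,2)])

lemma upper_triangular_mult:
  fixes A B :: "'a::semiring_0 mat"
  assumes A: "A \<in> carrier_mat n n" "upper_triangular A"
    and B: "B \<in> carrier_mat n n" "upper_triangular B"
  shows "upper_triangular (A * B)"
    and "i < n \<Longrightarrow> (A * B) $$ (i, i) = A $$ (i, i) * B $$ (i, i)"
proof -
  have vanish: "A $$ (i, t) * B $$ (t, j) = 0"
    if "i < n" "t < n" "j \<le> i" "t \<noteq> i \<or> j \<noteq> i" for i j t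
    using that A B by (cases "t < i") (auto simp: upper_triangular_def)
  note entry = index_mult_mat_sum[OF A(1) B(1)]
  show "upper_triangular (A * B)"
  proof
    fix i j assume "j < i" "i < dim_row (A * B)"
    then show "(A * B) $$ (i, j) = 0"
      using A vanish[of i _ j] by (simp add: entry)
  qed
  assume "i < n"
  then have "(A * B) $$ (i, i) = (\<Sum>t<n. if t = i then A $$ (i, i) * B $$ (i, i) else 0)"
    unfolding entry[OF \<open>i < n\<close> \<open>i < n\<close>] using vanish[of i] by (intro sum.cong) auto
  then show "(A * B) $$ (i, i) = A $$ (i, i) * B $$ (i, i)"
    using \<open>i < n\<close> by simp
qed

lemma upper_triangular_pow:
  fixes A :: "'a::comm_semiring_1 mat"
  assumes "A \<in> carrier_mat n n" "upper_triangular A"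
  shows "upper_triangular (A ^\<^sub>m k) \<and> (\<forall>i<n. (A ^\<^sub>m k) $$ (i, i) = (A $$ (i, i)) ^ k)"
proof (induction k)
  case 0
  show ?case using assms by auto
next
  case (Suc k)
  then show ?case
    using assms upper_triangular_mult[of "A ^\<^sub>m k" n A] by (simp add: mult.commute)
qed

definition mat_trace :: "'a::comm_semiring_1 mat \<Rightarrow> 'a" where
  "mat_trace A = (\<Sum>i<dim_row A. A $$ (i, i))"

lemma mat_trace_mult_comm:
  fixes A B :: "'a::comm_semiring_1 mat"
  assumes "A \<in> carrier_mat n m" "B \<in> carrier_mat m n"
  shows "mat_trace (A * B) = mat_trace (B * A)"
proof -
  have "mat_trace (A * B) = (\<Sum>i<n. \<Sum>t<m. A $$ (i, t) * B $$ (t, i))"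
    using assms by (simp add: mat_trace_def index_mult_mat_sum[OF assms] del: index_mult_mat(1))
  also have "\<dots> = (\<Sum>t<m. \<Sum>i<n. B $$ (t, i) * A $$ (i, t))"
    by (subst sum.swap) (simp add: mult.commute)
  also have "\<dots> = mat_trace (B * A)"
    using assms by (simp add: mat_trace_def index_mult_mat_sum[OF assms(2,1)] del: index_mult_mat(1))
  finally show ?thesis .
qed

lemma mat_trace_similar:
  fixes A :: "'a::comm_semiring_1 mat"
  assumes "A \<in> carrier_mat n n" "similar_mat_wit A B P Q"
  shows "mat_trace A = mat_trace B"
proof -
  note wit = similar_mat_witD2[OF assms]
  have "mat_trace A = mat_trace (Q * (P * B))"
    using wit mat_trace_mult_comm[of "P * B" n n Q] by simp
  also have "Q * (P * B) = B"
    using wit by (simp flip: assoc_mult_mat[of Q n n P n B n])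
  finally show ?thesis .
qed

lemma mat_trace_pow_eq_sum_eigenvalues:
  fixes A :: "'a::conjugatable_ordered_field mat"
  assumes A: "A \<in> carrier_mat n n" and char_poly: "char_poly A = (\<Prod>a\<leftarrow>es. [:- a, 1:])"
  shows "mat_trace (A ^\<^sub>m k) = (\<Sum>a\<leftarrow>es. a ^ k)"
proof -
  obtain B P Q where "schur_decomposition A es = (B, P, Q)"
    by (cases "schur_decomposition A es")
  with schur_decomposition[OF A char_poly]
  have sim: "similar_mat_wit A B P Q" and "upper_triangular B" and diag: "diag_mat B = es"
    by auto
  have B: "B \<in> carrier_mat n n"
    using similar_mat_witD2[OF A sim] by simp
  have "mat_trace (A ^\<^sub>m k) = mat_trace (B ^\<^sub>m k)"
    using A by (intro mat_trace_similar[OF pow_carrier_mat similar_mat_wit_pow[OF sim]])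
  also have "\<dots> = (\<Sum>i<n. (B $$ (i, i)) ^ k)"
    using upper_triangular_pow[OF B \<open>upper_triangular B\<close>, of k] B by (simp add: mat_trace_def)
  also have "\<dots> = (\<Sum>a\<leftarrow>es. a ^ k)"
    using B unfolding diag[symmetric] diag_mat_def
    by (simp add: sum_list_sum_nth atLeast0LessThan)
  finally show ?thesis .
qed

lemma frobenius_inner_pow_mat:
  fixes A :: "'a::conjugatable_ordered_field mat"
  assumes A: "A \<in> carrier_mat n n" "A\<^sup>T = A"
    and char_poly: "char_poly A = (\<Prod>a\<leftarrow>es. [:- a, 1:])"
  shows "(\<Sum>a<n. \<Sum>b<n. (A ^\<^sub>m p) $$ (a, b) * (A ^\<^sub>m r) $$ (a, b)) = (\<Sum>x\<leftarrow>es. x ^ (p + r))"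
proof -
  have "(\<Sum>b<n. (A ^\<^sub>m p) $$ (a, b) * (A ^\<^sub>m r) $$ (a, b)) = (A ^\<^sub>m (p + r)) $$ (a, a)"
    if "a < n" for a
    using that A pow_mat_symmetric_index[OF A _ that, of _ r]
    by (simp add: pow_mat_add[OF A(1)] index_mult_mat_sum[OF pow_carrier_mat pow_carrier_mat that that]
        del: index_mult_mat(1))
  then have "(\<Sum>a<n. \<Sum>b<n. (A ^\<^sub>m p) $$ (a, b) * (A ^\<^sub>m r) $$ (a, b)) = mat_trace (A ^\<^sub>m (p + r))"
    using A by (simp add: mat_trace_def)
  also have "\<dots> = (\<Sum>x\<leftarrow>es. x ^ (p + r))"
    by (rule mat_trace_pow_eq_sum_eigenvalues[OF A(1) char_poly])
  finally show ?thesis .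
qed

lemma sum_list_sum_swap: "(\<Sum>z\<leftarrow>xs. \<Sum>u\<in>U. h z u) = (\<Sum>u\<in>U. \<Sum>z\<leftarrow>xs. h z u)"
  by (induction xs) (simp_all add: sum.distrib)

lemma frobenius_inner_pow_mat_combinations:
  fixes A :: "'a::conjugatable_ordered_field mat"
  assumes A: "A \<in> carrier_mat n n" "A\<^sup>T = A"
    and char_poly: "char_poly A = (\<Prod>a\<leftarrow>es. [:- a, 1:])"
  shows "(\<Sum>a<n. \<Sum>b<n. (\<Sum>u\<in>U. x u * (A ^\<^sub>m f u) $$ (a, b)) * (\<Sum>v\<in>V. y v * (A ^\<^sub>m g v) $$ (a, b)))
    = (\<Sum>z\<leftarrow>es. (\<Sum>u\<in>U. x u * z ^ f u) * (\<Sum>v\<in>V. y v * z ^ g v))"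
proof -
  have "(\<Sum>a<n. \<Sum>b<n. (\<Sum>u\<in>U. x u * (A ^\<^sub>m f u) $$ (a, b)) * (\<Sum>v\<in>V. y v * (A ^\<^sub>m g v) $$ (a, b)))
      = (\<Sum>a<n. \<Sum>b<n. \<Sum>u\<in>U. \<Sum>v\<in>V. x u * y v * ((A ^\<^sub>m f u) $$ (a, b) * (A ^\<^sub>m g v) $$ (a, b)))"
    by (simp only: sum_product) (simp only: mult_ac)
  also have "\<dots> = (\<Sum>u\<in>U. \<Sum>v\<in>V. \<Sum>a<n. \<Sum>b<n. x u * y v * ((A ^\<^sub>m f u) $$ (a, b) * (A ^\<^sub>m g v) $$ (a, b)))"
    by (rule sum_swap_pairs)
  also have "\<dots> = (\<Sum>u\<in>U. \<Sum>v\<in>V. x u * y v * (\<Sum>a<n. \<Sum>b<n. (A ^\<^sub>m f u) $$ (a, b) * (A ^\<^sub>m g v) $$ (a, b)))"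
    by (simp only: sum_distrib_left)
  also have "\<dots> = (\<Sum>u\<in>U. \<Sum>v\<in>V. x u * y v * (\<Sum>z\<leftarrow>es. z ^ (f u + g v)))"
    by (simp only: frobenius_inner_pow_mat[OF A char_poly])
  also have "\<dots> = (\<Sum>z\<leftarrow>es. \<Sum>u\<in>U. \<Sum>v\<in>V. x u * y v * z ^ (f u + g v))"
    by (simp only: sum_list_sum_swap sum_list_const_mult)
  also have "\<dots> = (\<Sum>z\<leftarrow>es. (\<Sum>u\<in>U. x u * z ^ f u) * (\<Sum>v\<in>V. y v * z ^ g v))"
    by (simp add: sum_product power_add mult_ac)
  finally show ?thesis .
qed

definition poly_mat :: "'a::comm_semiring_1 poly \<Rightarrow> 'a mat \<Rightarrow> 'a mat" where
  "poly_mat p A = mat (dim_row A) (dim_col A) (\<lambda>(a, b). \<Sum>j\<le>degree p. coeff p j * (A ^\<^sub>m j) $$ (a, b))"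

lemma gram_poly_mat:
  fixes A :: "'a::comm_semiring_1 mat"
  assumes A: "A \<in> carrier_mat n n" "A\<^sup>T = A" and "a < n" "b < n"
  shows "(\<Sum>t<n. poly_mat q A $$ (t, a) * poly_mat q A $$ (t, b))
    = (\<Sum>(j, k)\<in>{..degree q} \<times> {..degree q}. coeff q j * coeff q k * (A ^\<^sub>m (j + k)) $$ (a, b))"
proof -
  have "(\<Sum>t<n. poly_mat q A $$ (t, a) * poly_mat q A $$ (t, b))
      = (\<Sum>t<n. \<Sum>j\<le>degree q. \<Sum>k\<le>degree q. coeff q j * coeff q k * ((A ^\<^sub>m j) $$ (a, t) * (A ^\<^sub>m k) $$ (t, b)))"
    using assms pow_mat_symmetric_index[OF A \<open>a < n\<close>]
    by (intro sum.cong refl) (simp add: poly_mat_def sum_product, simp only: mult_ac)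
  also have "\<dots> = (\<Sum>j\<le>degree q. \<Sum>k\<le>degree q. \<Sum>t<n. coeff q j * coeff q k * ((A ^\<^sub>m j) $$ (a, t) * (A ^\<^sub>m k) $$ (t, b)))"
    by (rule sum_swap_inner_to_outer[symmetric])
  also have "\<dots> = (\<Sum>j\<le>degree q. \<Sum>k\<le>degree q. coeff q j * coeff q k * (\<Sum>t<n. (A ^\<^sub>m j) $$ (a, t) * (A ^\<^sub>m k) $$ (t, b)))"
    by (simp only: sum_distrib_left)
  also have "\<dots> = (\<Sum>j\<le>degree q. \<Sum>k\<le>degree q. coeff q j * coeff q k * (A ^\<^sub>m (j + k)) $$ (a, b))"
    using assms
    by (simp add: pow_mat_add[OF A(1)] index_mult_mat_sum[OF pow_carrier_mat pow_carrier_mat assms(3,4)]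
        del: index_mult_mat(1))
  finally show ?thesis
    by (simp add: sum.cartesian_product)
qed

lemma interpolating_poly_exists:
  fixes f :: "'a::field \<Rightarrow> 'a"
  assumes "finite S"
  shows "\<exists>p. \<forall>x\<in>S. poly p x = f x"
  using assms
proof (induction S rule: finite_induct)
  case empty
  show ?case by simp
next
  case (insert z S)
  then obtain p where p: "\<forall>x\<in>S. poly p x = f x"
    by blast
  define w where "w = (\<Prod>s\<in>S. [:- s, 1:])"
  have "poly w z \<noteq> 0" and "\<forall>x\<in>S. poly w x = 0"
    unfolding w_def using insert.hyps by (auto simp: poly_prod)
  then have "\<forall>x\<in>insert z S. poly (p + Polynomial.smult ((f z - poly p z) / poly w z) w) x = f x"
    using p by auto
  then show ?case
    by blast
qed

lemma gram_poly_mat_positive_part: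
  fixes A :: "'a::conjugatable_ordered_field mat"
  assumes A: "A \<in> carrier_mat n n" "A\<^sup>T = A"
    and char_poly: "char_poly A = (\<Prod>a\<leftarrow>es. [:- a, 1:])"
    and q: "\<And>x. x \<in> set es \<Longrightarrow> (poly q x)\<^sup>2 = max x 0"
  defines "M a b \<equiv> \<Sum>t<n. poly_mat q A $$ (t, a) * poly_mat q A $$ (t, b)"
  shows "(\<Sum>a<n. \<Sum>b<n. M a b * A $$ (a, b)) = (\<Sum>x\<leftarrow>es. (max x 0)\<^sup>2)"
    and "(\<Sum>a<n. \<Sum>b<n. (M a b)\<^sup>2) = (\<Sum>x\<leftarrow>es. (max x 0)\<^sup>2)"
proof -
  define J where "J = {..degree q} \<times> {..degree q}"
  define w where "w u = coeff q (fst u) * coeff q (snd u)" for u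
  have M: "M a b = (\<Sum>u\<in>J. w u * (A ^\<^sub>m (fst u + snd u)) $$ (a, b))" if "a < n" "b < n" for a b
    using gram_poly_mat[OF A that] unfolding M_def J_def w_def by (simp add: case_prod_beta)
  have w: "(\<Sum>u\<in>J. w u * x ^ (fst u + snd u)) = max x 0" if "x \<in> set es" for x
    using q[OF that] unfolding J_def w_def
    by (simp add: poly_altdef power2_eq_square sum_product sum.cartesian_product power_add case_prod_beta mult_ac)
  have max_times_self: "max x 0 * x = (max x 0)\<^sup>2" for x :: 'a
    by (simp add: max_def power2_eq_square)
  have "(\<Sum>a<n. \<Sum>b<n. M a b * A $$ (a, b))
      = (\<Sum>a<n. \<Sum>b<n. (\<Sum>u\<in>J. w u * (A ^\<^sub>m (fst u + snd u)) $$ (a, b)) * (\<Sum>v\<in>{1}. 1 * (A ^\<^sub>m v) $$ (a, b)))"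
    using A M by simp
  also have "\<dots> = (\<Sum>z\<leftarrow>es. (\<Sum>u\<in>J. w u * z ^ (fst u + snd u)) * (\<Sum>v\<in>{1}. 1 * z ^ v))"
    by (rule frobenius_inner_pow_mat_combinations[OF A char_poly])
  also have "\<dots> = (\<Sum>x\<leftarrow>es. (max x 0)\<^sup>2)"
    using w by (simp add: max_times_self cong: map_cong)
  finally show "(\<Sum>a<n. \<Sum>b<n. M a b * A $$ (a, b)) = (\<Sum>x\<leftarrow>es. (max x 0)\<^sup>2)" .
  have "(\<Sum>a<n. \<Sum>b<n. (M a b)\<^sup>2)
      = (\<Sum>a<n. \<Sum>b<n. (\<Sum>u\<in>J. w u * (A ^\<^sub>m (fst u + snd u)) $$ (a, b)) * (\<Sum>u\<in>J. w u * (A ^\<^sub>m (fst u + snd u)) $$ (a, b)))"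
    using M by (simp add: power2_eq_square)
  also have "\<dots> = (\<Sum>z\<leftarrow>es. (\<Sum>u\<in>J. w u * z ^ (fst u + snd u)) * (\<Sum>u\<in>J. w u * z ^ (fst u + snd u)))"
    by (rule frobenius_inner_pow_mat_combinations[OF A char_poly])
  also have "\<dots> = (\<Sum>x\<leftarrow>es. (max x 0)\<^sup>2)"
    using w by (simp add: power2_eq_square cong: map_cong)
  finally show "(\<Sum>a<n. \<Sum>b<n. (M a b)\<^sup>2) = (\<Sum>x\<leftarrow>es. (max x 0)\<^sup>2)" .
qed

theorem sum_sq_positive_eigenvalues_le:
  fixes A :: "real mat" and c :: "nat \<Rightarrow> 'c"
  assumes A: "A \<in> carrier_mat n n" "A\<^sup>T = A"
    and char_poly: "char_poly A = (\<Prod>a\<leftarrow>es. [:- a, 1:])"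
    and colouring: "finite C" "c ` {..<n} \<subseteq> C"
    and zero_on_classes: "\<And>a b. a < n \<Longrightarrow> b < n \<Longrightarrow> c a = c b \<Longrightarrow> A $$ (a, b) = 0"
  shows "(\<Sum>x\<leftarrow>es. (max x 0)\<^sup>2) \<le> (1 - 1 / card C) * (\<Sum>a<n. \<Sum>b<n. (A $$ (a, b))\<^sup>2)"
proof -
  obtain q where "\<forall>x\<in>set es. poly q x = sqrt (max x 0)"
    using interpolating_poly_exists[of "set es" "\<lambda>x. sqrt (max x 0)"] by auto
  then have q: "(poly q x)\<^sup>2 = max x 0" if "x \<in> set es" for x
    using that by simp
  define N where "N t a = poly_mat q A $$ (t, a)" for t a
  note gram = gram_poly_mat_positive_part[OF A char_poly q, folded N_def]
  show ?thesis
    using zero_on_classes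
    by (intro gram_colour_bound[where V = "{..<n}" and T = "{..<n}" and N = N and A = "\<lambda>a b. A $$ (a, b)",
          OF finite_lessThan colouring _ gram]) auto
qed

lemma sorted_desc_nth_pos:
  fixes xs :: "'a::{linorder, zero} list"
  assumes "sorted_wrt (\<ge>) xs" "i < length (filter (\<lambda>x. x > 0) xs)"
  shows "xs ! i > 0"
  using assms
proof (induction xs arbitrary: i)
  case Nil
  then show ?case by simp
next
  case (Cons x xs)
  show ?case
  proof (cases "x > 0")
    case True
    then show ?thesis using Cons by (cases i) auto
  next
    case False
    then have "filter (\<lambda>x. x > 0) xs = []"
      using Cons.prems(1) by (auto simp: filter_empty_conv)
    then show ?thesis
      using Cons.prems(2) False by simp
  qed
qed

lemma sum_sq_prefix_le_sum_sq_pos_part: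
  fixes xs :: "real list"
  assumes "sorted_wrt (\<ge>) xs" "l \<le> length (filter (\<lambda>x. x > 0) xs)"
  shows "(\<Sum>i<l. (xs ! i)\<^sup>2) \<le> (\<Sum>x\<leftarrow>xs. (max x 0)\<^sup>2)"
proof -
  have "l \<le> length xs"
    using assms(2) length_filter_le order_trans by blast
  have pos: "xs ! i \<ge> 0" if "i < l" for i
    using sorted_desc_nth_pos[OF assms(1), of i] assms(2) that by linarith
  then have "(\<Sum>i<l. (xs ! i)\<^sup>2) = (\<Sum>i<l. (max (xs ! i) 0)\<^sup>2)"
    by (intro sum.cong) (simp_all add: max_absorb1)
  also have "\<dots> \<le> (\<Sum>i<length xs. (max (xs ! i) 0)\<^sup>2)"
    using \<open>l \<le> length xs\<close> by (intro sum_mono2) auto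
  also have "\<dots> = (\<Sum>x\<leftarrow>xs. (max x 0)\<^sup>2)"
    by (simp add: sum_list_sum_nth atLeast0LessThan)
  finally show ?thesis .
qed

lemma adj_matrix_carrier: "adj_matrix n E \<in> carrier_mat n n"
  by (simp add: adj_matrix_def)

lemma adj_matrix_index: "a < n \<Longrightarrow> b < n \<Longrightarrow> adj_matrix n E $$ (a, b) = (if E a b then 1 else 0)"
  by (simp add: adj_matrix_def)

lemma transpose_adj_matrix:
  assumes "simple_graph n E"
  shows "(adj_matrix n E)\<^sup>T = adj_matrix n E"
  using assms by (intro eq_matI) (auto simp: adj_matrix_def simple_graph_def)

lemma card_adjacent_pairs:
  assumes "simple_graph n E"
  shows "card {(a, b). a < n \<and> b < n \<and> E a b} = 2 * num_edges n E"
proof -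
  define X where "X = {(a, b). a < b \<and> b < n \<and> E a b}"
  have "finite X"
    unfolding X_def by (rule finite_subset[of _ "{..<n} \<times> {..<n}"]) auto
  have "{(a, b). a < n \<and> b < n \<and> E a b} = X \<union> prod.swap ` X"
    using assms unfolding X_def simple_graph_def by (auto simp: image_iff) (metis linorder_neqE_nat)
  moreover have "X \<inter> prod.swap ` X = {}"
    unfolding X_def by auto
  ultimately show ?thesis
    using \<open>finite X\<close> by (simp add: card_Un_disjoint card_image num_edges_def X_def[symmetric])
qed

lemma sum_sq_adj_matrix:
  assumes "simple_graph n E"
  shows "(\<Sum>a<n. \<Sum>b<n. (adj_matrix n E $$ (a, b))\<^sup>2) = 2 * real (num_edges n E)"
proof -
  have "(\<Sum>a<n. \<Sum>b<n. (adj_matrix n E $$ (a, b))\<^sup>2) = (\<Sum>a<n. \<Sum>b<n. of_bool (E a b))"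
    by (intro sum.cong refl) (simp add: adj_matrix_index)
  also have "\<dots> = (\<Sum>(a, b)\<in>{..<n} \<times> {..<n}. of_bool (E a b))"
    by (rule sum.cartesian_product)
  also have "\<dots> = real (card ({..<n} \<times> {..<n} \<inter> {p. case_prod E p}))"
    by (simp add: case_prod_beta)
  also have "{..<n} \<times> {..<n} \<inter> {p. case_prod E p} = {(a, b). a < n \<and> b < n \<and> E a b}"
    by auto
  finally show ?thesis
    using card_adjacent_pairs[OF assms] by simp
qed

lemma chromatic_colouring_exists:
  assumes "simple_graph n E"
  obtains c where "proper_colouring n E (chromatic_number n E) c"
proof -
  have "proper_colouring n E n (\<lambda>i. i)"
    using assms by (auto simp: proper_colouring_def simple_graph_def)
  then show ?thesis
    using that LeastI_ex[of "\<lambda>k. \<exists>c. proper_colouring n E k c"] unfolding chromatic_number_def by blast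
qed

theorem mainTheorem1:
  fixes n :: nat and E :: "nat \<Rightarrow> nat \<Rightarrow> bool" and mu :: "real list"
  assumes "simple_graph n E"
    and "clique_number n E = chromatic_number n E"
    and "adj_eigenvalues_sorted n E mu"
  shows "(\<Sum>i<min (length (filter (\<lambda>x. x > 0) mu)) (clique_number n E). (mu ! i)^2)
           \<le> 2 * real (num_edges n E) * (real (clique_number n E) - 1) / real (clique_number n E)"
proof -
  let ?A = "adj_matrix n E" and ?k = "chromatic_number n E"
  obtain c where c: "proper_colouring n E ?k c"
    using assms(1) by (rule chromatic_colouring_exists)
  have sorted: "sorted_wrt (\<ge>) mu" and char_poly: "char_poly ?A = (\<Prod>a\<leftarrow>mu. [:- a, 1:])"
    using assms(3) unfolding adj_eigenvalues_sorted_def by auto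
  have "(\<Sum>i<min (length (filter (\<lambda>x. x > 0) mu)) (clique_number n E). (mu ! i)^2)
      \<le> (\<Sum>x\<leftarrow>mu. (max x 0)\<^sup>2)"
    by (rule sum_sq_prefix_le_sum_sq_pos_part[OF sorted]) simp
  also have "\<dots> \<le> (1 - 1 / card {..<?k}) * (\<Sum>a<n. \<Sum>b<n. (?A $$ (a, b))\<^sup>2)"
    using c
    by (intro sum_sq_positive_eigenvalues_le[OF adj_matrix_carrier transpose_adj_matrix[OF assms(1)] char_poly])
      (auto simp: proper_colouring_def adj_matrix_index)
  also have "\<dots> = (1 - 1 / ?k) * (2 * real (num_edges n E))"
    by (simp add: sum_sq_adj_matrix[OF assms(1)])
  finally show ?thesis
    using assms(2) by (cases "?k = 0") (simp_all add: field_simps)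
qed

end
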